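(* In the setting described in the context, $\mathcal{D}_{\boldsymbol{x}}=\mathcal{D}_{\boldsymbol{x}'}$ for every $\boldsymbol{x},\boldsymbol{x}'\in\mathbb{Z}_+^2$.
   Context: Let $S_0=\{1,\dots,s_0\}$ be finite and $\{\boldsymbol{Y}_n\}$ a Markov chain on $\mathbb{S}=\mathbb{Z}^2\times S_0$ with $\mathbb{P}(\boldsymbol{Y}_{n+1}=(x_1+k,x_2+l,j')\mid\boldsymbol{Y}_n=(x_1,x_2,j))=[A_{k,l}]_{j,j'}$ for $k,l\in\{-1,0,1\}$ (no other transitions), $A_{k,l}$ nonnegative $s_0\times s_0$ with $\sum A_{k,l}$ stochastic. Let $\mathbb{S}_+=\mathbb{Z}_+^2\times S_0$, $P_+$ the restriction of the transition matrix to $\mathbb{S}_+$, $\tau=\inf\{n\ge0:\boldsymbol{Y}_n\notin\mathbb{S}_+\}$, $\tilde q_{\boldsymbol{y},\boldsymbol{y}'}=\mathbb{E}\big(\sum_{n=0}^{\tau-1}1(\boldsymbol{Y}_n=\boldsymbol{y}')\mid\boldsymbol{Y}_0=\boldsymbol{y}\big)$. With $\boldsymbol\pi_{*,*}$ the stationary distribution of $\sum A_{k,l}$, $a_1=\boldsymbol{\pi}_{*,*}\sum_l(A_{1,l}-A_{-1,l})\mathbf{1}$, $a_2=\boldsymbol{\pi}_{*,*}\sum_k(A_{k,1}-A_{k,-1})\mathbf{1}$. Standing assumptions: $\{\boldsymbol Y_n\}$ irreducible and aperiodic; $a_1<0$ or $a_2<0$; $P_+$ irreducible. For $\boldsymbol{x}\in\mathbb{Z}_+^2$,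 $\Phi_{\boldsymbol{x}}(\theta_1,\theta_2)$ is the $s_0\times s_0$ matrix with $(j,j')$ entry $\sum_{k_1,k_2\ge0}e^{k_1\theta_1+k_2\theta_2}\tilde q_{(\boldsymbol{x},j),(k_1,k_2,j')}$, and $\mathcal{D}_{\boldsymbol{x}}$ is the interior of $\{(\theta_1,\theta_2)\in\mathbb{R}^2:\Phi_{\boldsymbol{x}}(\theta_1,\theta_2)<\infty\text{ elementwise}\}$. *)

theory Defs
  imports "HOL-Analysis.Analysis"
begin

(* States of the chain: (x1, x2, j) in Z^2 x S0; the phase set S0 is a finite type 'j.
   A k l j j' stands for [A_{k,l}]_{j,j'}, only k,l in {-1,0,1} are used. *)
type_synonym 'j state = "int \<times> int \<times> 'j"

definition steps :: "int set" where
  "steps = {-1, 0, 1}"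

definition trans_prob :: "(int \<Rightarrow> int \<Rightarrow> 'j \<Rightarrow> 'j \<Rightarrow> real) \<Rightarrow> 'j state \<Rightarrow> 'j state \<Rightarrow> real" where
  "trans_prob A y y' = (case y of (x1, x2, j) \<Rightarrow> case y' of (y1, y2, j') \<Rightarrow>
      if \<bar>y1 - x1\<bar> \<le> 1 \<and> \<bar>y2 - x2\<bar> \<le> 1 then A (y1 - x1) (y2 - x2) j j' else 0)"

definition in_Splus :: "'j state \<Rightarrow> bool" where
  "in_Splus y = (fst y \<ge> 0 \<and> fst (snd y) \<ge> 0)"

definition pos_rel :: "(int \<Rightarrow> int \<Rightarrow> 'j \<Rightarrow> 'j \<Rightarrow> real) \<Rightarrow> ('j state \<times> 'j state) set" where
  "pos_rel A = {(y, y'). trans_prob A y y' > 0}"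

definition irreducible_chain :: "(int \<Rightarrow> int \<Rightarrow> 'j \<Rightarrow> 'j \<Rightarrow> real) \<Rightarrow> bool" where
  "irreducible_chain A = (\<forall>y y'. (y, y') \<in> (pos_rel A)\<^sup>*)"

definition aperiodic_chain :: "(int \<Rightarrow> int \<Rightarrow> 'j \<Rightarrow> 'j \<Rightarrow> real) \<Rightarrow> bool" where
  "aperiodic_chain A = (\<forall>y. Gcd {n::nat. n > 0 \<and> (y, y) \<in> (pos_rel A) ^^ n} = 1)"

definition Splus_irreducible :: "(int \<Rightarrow> int \<Rightarrow> 'j \<Rightarrow> 'j \<Rightarrow> real) \<Rightarrow> bool" where
  "Splus_irreducible A = (\<forall>y y'. in_Splus y \<longrightarrow> in_Splus y' \<longrightarrow>
      (y, y') \<in> {(u, v). (u, v) \<in> pos_rel A \<and> in_Splus u \<and> in_Splus v}\<^sup>*)"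

primrec Pplus_pow :: "(int \<Rightarrow> int \<Rightarrow> 'j::finite \<Rightarrow> 'j \<Rightarrow> real) \<Rightarrow> nat \<Rightarrow> 'j state \<Rightarrow> 'j state \<Rightarrow> ennreal" where
  "Pplus_pow A 0 y y' = (if y = y' \<and> in_Splus y then 1 else 0)"
| "Pplus_pow A (Suc n) y y' =
     (\<Sum>(k, l, i) \<in> steps \<times> steps \<times> (UNIV :: 'j set).
        (let z = (fst y + k, fst (snd y) + l, i) in
          if in_Splus y \<and> in_Splus z then ennreal (trans_prob A y z) * Pplus_pow A n z y' else 0))"

(* expected number of visits to y' before leaving S_+, starting at y:
   sum_n P(Y_n = y', n < tau | Y_0 = y) = sum_n (P_+^n)(y,y') *)
definition q_tilde :: "(int \<Rightarrow> int \<Rightarrow> 'j::finite \<Rightarrow> 'j \<Rightarrow> real) \<Rightarrow> 'j state \<Rightarrow> 'j state \<Rightarrow> ennreal" where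
  "q_tilde A y y' = (\<Sum>n. Pplus_pow A n y y')"

definition Phi :: "(int \<Rightarrow> int \<Rightarrow> 'j::finite \<Rightarrow> 'j \<Rightarrow> real) \<Rightarrow> nat \<times> nat \<Rightarrow> 'j \<Rightarrow> 'j \<Rightarrow> real \<times> real \<Rightarrow> ennreal" where
  "Phi A x j j' \<theta> = (\<Sum>\<^sub>\<infinity>(k1, k2) \<in> (UNIV :: (nat \<times> nat) set).
      ennreal (exp (real k1 * fst \<theta> + real k2 * snd \<theta>)) *
      q_tilde A (int (fst x), int (snd x), j) (int k1, int k2, j'))"

definition D_dom :: "(int \<Rightarrow> int \<Rightarrow> 'j::finite \<Rightarrow> 'j \<Rightarrow> real) \<Rightarrow> nat \<times> nat \<Rightarrow> (real \<times> real) set" where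
  "D_dom A x = interior {\<theta>. \<forall>j j'. Phi A x j j' \<theta> < \<infinity>}"

definition Abar :: "(int \<Rightarrow> int \<Rightarrow> 'j::finite \<Rightarrow> 'j \<Rightarrow> real) \<Rightarrow> 'j \<Rightarrow> 'j \<Rightarrow> real" where
  "Abar A j j' = (\<Sum>k\<in>steps. \<Sum>l\<in>steps. A k l j j')"

definition stationary :: "(int \<Rightarrow> int \<Rightarrow> 'j::finite \<Rightarrow> 'j \<Rightarrow> real) \<Rightarrow> ('j \<Rightarrow> real) \<Rightarrow> bool" where
  "stationary A \<pi> = ((\<forall>j. \<pi> j \<ge> 0) \<and> (\<Sum>j\<in>UNIV. \<pi> j) = 1 \<and>
      (\<forall>j'. (\<Sum>j\<in>UNIV. \<pi> j * Abar A j j') = \<pi> j'))"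

definition drift1 :: "(int \<Rightarrow> int \<Rightarrow> 'j::finite \<Rightarrow> 'j \<Rightarrow> real) \<Rightarrow> ('j \<Rightarrow> real) \<Rightarrow> real" where
  "drift1 A \<pi> = (\<Sum>j\<in>UNIV. \<pi> j * (\<Sum>l\<in>steps. \<Sum>j'\<in>UNIV. A 1 l j j' - A (-1) l j j'))"

definition drift2 :: "(int \<Rightarrow> int \<Rightarrow> 'j::finite \<Rightarrow> 'j \<Rightarrow> real) \<Rightarrow> ('j \<Rightarrow> real) \<Rightarrow> real" where
  "drift2 A \<pi> = (\<Sum>j\<in>UNIV. \<pi> j * (\<Sum>k\<in>steps. \<Sum>j'\<in>UNIV. A k 1 j j' - A k (-1) j j'))"

end

theory Submission
  imports Defs
begin

text \<open>If the chain restricted to \<open>S\<^sub>+\<close> leads from \<open>y\<close> to \<open>z\<close> along a path of probability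
  \<open>c > 0\<close>, then by conditioning on that initial path segment
  \<open>q\<^sup>~(y,\<cdot>) \<ge> c q\<^sup>~(z,\<cdot>)\<close>. Hence \<open>\<Phi>\<^sub>x\<close> dominates a positive multiple of every row of
  \<open>\<Phi>\<^sub>x\<^sub>'\<close>, so finiteness of \<open>\<Phi>\<^sub>x\<close> implies that of \<open>\<Phi>\<^sub>x\<^sub>'\<close>. Irreducibility of \<open>P\<^sub>+\<close>
  gives this in both directions, so the regions of finiteness, and with them their
  interiors, coincide.\<close>

definition Pplus_rel :: "(int \<Rightarrow> int \<Rightarrow> 'j \<Rightarrow> 'j \<Rightarrow> real) \<Rightarrow> ('j state \<times> 'j state) set" where
  "Pplus_rel A = {(u, v). (u, v) \<in> pos_rel A \<and> in_Splus u \<and> in_Splus v}"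

lemma Pplus_pow_Suc_ge:
  fixes A :: "int \<Rightarrow> int \<Rightarrow> 'j::finite \<Rightarrow> 'j \<Rightarrow> real"
  assumes "(y, w) \<in> Pplus_rel A"
  shows "ennreal (trans_prob A y w) * Pplus_pow A n w y' \<le> Pplus_pow A (Suc n) y y'"
proof -
  obtain y1 y2 j where y: "y = (y1, y2, j)" by (cases y) auto
  obtain w1 w2 i where w: "w = (w1, w2, i)" by (cases w) auto
  have tp: "trans_prob A y w > 0" and sp: "in_Splus y" "in_Splus w"
    using assms by (auto simp: Pplus_rel_def pos_rel_def)
  have "\<bar>w1 - y1\<bar> \<le> 1" "\<bar>w2 - y2\<bar> \<le> 1"
    using tp by (auto simp: trans_prob_def y w split: if_splits)
  then have step: "(w1 - y1, w2 - y2, i) \<in> steps \<times> steps \<times> UNIV"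
    by (auto simp: steps_def)
  let ?f = "\<lambda>(k, l, i). (let z = (fst y + k, fst (snd y) + l, i) in
          if in_Splus y \<and> in_Splus z then ennreal (trans_prob A y z) * Pplus_pow A n z y' else 0)"
  have "ennreal (trans_prob A y w) * Pplus_pow A n w y' = ?f (w1 - y1, w2 - y2, i)"
    using sp by (simp add: y w Let_def)
  also have "\<dots> \<le> sum ?f (steps \<times> steps \<times> UNIV)"
    using step by (intro member_le_sum) (auto simp: steps_def)
  also have "\<dots> = Pplus_pow A (Suc n) y y'" by simp
  finally show ?thesis .
qed

lemma q_tilde_ge_step:
  fixes A :: "int \<Rightarrow> int \<Rightarrow> 'j::finite \<Rightarrow> 'j \<Rightarrow> real"
  assumes "(y, w) \<in> Pplus_rel A"
  shows "ennreal (trans_prob A y w) * q_tilde A w y' \<le> q_tilde A y y'"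
proof -
  have "ennreal (trans_prob A y w) * q_tilde A w y' =
      (\<Sum>n. ennreal (trans_prob A y w) * Pplus_pow A n w y')"
    by (simp add: q_tilde_def)
  also have "\<dots> \<le> (\<Sum>n. Pplus_pow A (n + 1) y y')"
    using Pplus_pow_Suc_ge[OF assms] by (intro suminf_le) (auto simp del: Pplus_pow.simps)
  also have "\<dots> \<le> (\<Sum>n. Pplus_pow A (n + 1) y y') + (\<Sum>n<1. Pplus_pow A n y y')"
    by (simp del: Pplus_pow.simps)
  also have "\<dots> = q_tilde A y y'"
    unfolding q_tilde_def by (rule suminf_offset[symmetric]) simp
  finally show ?thesis .
qed

lemma q_tilde_ge_cmult_if_reachable:
  fixes A :: "int \<Rightarrow> int \<Rightarrow> 'j::finite \<Rightarrow> 'j \<Rightarrow> real"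
  assumes "(y, z) \<in> (Pplus_rel A)\<^sup>*"
  obtains c where "c > 0" "\<And>y'. ennreal c * q_tilde A z y' \<le> q_tilde A y y'"
  using assms
proof (induction arbitrary: thesis rule: converse_rtrancl_induct)
  case base
  show ?case by (rule base[of 1]) auto
next
  case (step y w)
  obtain c where c: "c > 0" "\<And>y'. ennreal c * q_tilde A z y' \<le> q_tilde A w y'"
    using step.IH by blast
  have p: "trans_prob A y w > 0"
    using step.hyps(1) by (auto simp: Pplus_rel_def pos_rel_def)
  show ?case
  proof (rule step.prems)
    show "trans_prob A y w * c > 0" using p c by simp
  next
    fix y'
    have "ennreal (trans_prob A y w * c) * q_tilde A z y' =
        ennreal (trans_prob A y w) * (ennreal c * q_tilde A z y')"
      using p c by (simp add: ennreal_mult mult.assoc)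
    also have "\<dots> \<le> ennreal (trans_prob A y w) * q_tilde A w y'"
      by (intro mult_left_mono c(2)) simp
    also have "\<dots> \<le> q_tilde A y y'"
      by (rule q_tilde_ge_step[OF step.hyps(1)])
    finally show "ennreal (trans_prob A y w * c) * q_tilde A z y' \<le> q_tilde A y y'" .
  qed
qed

lemma infsum_cmult_right_ennreal:
  fixes f :: "'a \<Rightarrow> ennreal"
  assumes "c < \<infinity>"
  shows "infsum (\<lambda>x. c * f x) S = c * infsum f S"
proof -
  have "(f has_sum infsum f S) S"
    by (simp add: has_sum_infsum nonneg_summable_on_complete)
  then have "((\<lambda>F. c * sum f F) \<longlongrightarrow> c * infsum f S) (finite_subsets_at_top S)"
    unfolding has_sum_def using assms by (intro ennreal_tendsto_cmult) auto
  then have "((\<lambda>x. c * f x) has_sum c * infsum f S) S"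
    unfolding has_sum_def by (simp add: sum_distrib_left)
  then show ?thesis by (rule infsumI)
qed

lemma Phi_ge_cmult:
  fixes A :: "int \<Rightarrow> int \<Rightarrow> 'j::finite \<Rightarrow> 'j \<Rightarrow> real"
  assumes "c > 0"
    and q_ge: "\<And>y'. ennreal c * q_tilde A (int (fst x'), int (snd x'), i) y'
                  \<le> q_tilde A (int (fst x), int (snd x), j) y'"
  shows "ennreal c * Phi A x' i j' \<theta> \<le> Phi A x j j' \<theta>"
proof -
  have "ennreal c * Phi A x' i j' \<theta> = (\<Sum>\<^sub>\<infinity>(k1, k2) \<in> UNIV.
      ennreal (exp (real k1 * fst \<theta> + real k2 * snd \<theta>)) *
      (ennreal c * q_tilde A (int (fst x'), int (snd x'), i) (int k1, int k2, j')))"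
    unfolding Phi_def
    by (subst infsum_cmult_right_ennreal[symmetric])
      (auto intro!: infsum_cong simp: ac_simps split: prod.splits)
  also have "\<dots> \<le> Phi A x j j' \<theta>"
    unfolding Phi_def using q_ge
    by (intro infsum_mono) (auto intro!: mult_left_mono simp: nonneg_summable_on_complete)
  finally show ?thesis .
qed

lemma Phi_finite_transfer:
  fixes A :: "int \<Rightarrow> int \<Rightarrow> 'j::finite \<Rightarrow> 'j \<Rightarrow> real"
  assumes "Splus_irreducible A"
    and fin: "\<forall>j j'. Phi A x j j' \<theta> < \<infinity>"
  shows "Phi A x' i j' \<theta> < \<infinity>"
proof -
  fix j :: 'j
  have "((int (fst x), int (snd x), j), (int (fst x'), int (snd x'), i)) \<in> (Pplus_rel A)\<^sup>*"
    using assms(1) unfolding Splus_irreducible_def Pplus_rel_def by (auto simp: in_Splus_def)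
  then obtain c where "c > 0"
    and "\<And>y'. ennreal c * q_tilde A (int (fst x'), int (snd x'), i) y'
               \<le> q_tilde A (int (fst x), int (snd x), j) y'"
    using q_tilde_ge_cmult_if_reachable by blast
  then have "ennreal c * Phi A x' i j' \<theta> \<le> Phi A x j j' \<theta>"
    by (rule Phi_ge_cmult)
  also have "\<dots> < \<infinity>"
    using fin by blast
  finally have "ennreal c * Phi A x' i j' \<theta> < \<infinity>" .
  with \<open>c > 0\<close> show ?thesis
    by (auto simp: ennreal_mult_less_top top.not_eq_extremum)
qed

theorem proposition4p3:
  fixes A :: "int \<Rightarrow> int \<Rightarrow> 'j::finite \<Rightarrow> 'j \<Rightarrow> real"
    and x x' :: "nat \<times> nat"
  assumes nonneg: "\<forall>k\<in>steps. \<forall>l\<in>steps. \<forall>j j'. A k l j j' \<ge> 0"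
    and stoch: "\<forall>j. (\<Sum>k\<in>steps. \<Sum>l\<in>steps. \<Sum>j'\<in>UNIV. A k l j j') = 1"
    and irred: "irreducible_chain A"
    and aper: "aperiodic_chain A"
    and drift: "\<exists>\<pi>. stationary A \<pi> \<and> (drift1 A \<pi> < 0 \<or> drift2 A \<pi> < 0)"
    and irred_plus: "Splus_irreducible A"
  shows "D_dom A x = D_dom A x'"
proof -
  have "{\<theta>. \<forall>j j'. Phi A x j j' \<theta> < \<infinity>} = {\<theta>. \<forall>j j'. Phi A x' j j' \<theta> < \<infinity>}"
    using Phi_finite_transfer[OF irred_plus] by blast
  then show ?thesis
    unfolding D_dom_def by simp
qed

end
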